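(* Consider equation (E) and assume each $\tau_i$ is non-decreasing. Suppose either $$\limsup_{t\to+\infty}\prod_{j=1}^{m}\Bigg[\prod_{i=1}^{m}\int_{\tau_j(t)}^{t}p_i(s)\exp\Bigg(\int_{\tau_i(s)}^{\tau_i(t)}\sum_{k=1}^{m}p_k(\xi)\exp\bigg(\int_{\tau_k(\xi)}^{\xi}\sum_{l=1}^{m}p_l(u)\,du\bigg)d\xi\Bigg)ds\Bigg]^{1/m}>\frac{1}{m^{m}},$$ or, assuming in addition that $\liminf_{t\to\infty}\int_{\tau_i(t)}^{t}p_i(s)\,ds=\beta_i\in(0,1/e]$ for every $i$ and letting $\lambda_i^{*}$ be the smallest real root of $e^{\beta_i\lambda}=\lambda$, $$\limsup_{\varepsilon\to0+}\Bigg(\limsup_{t\to+\infty}\prod_{j=1}^{m}\bigg(\prod_{i=1}^{m}\int_{\tau_j(t)}^{t}p_i(s)\exp\Big(\int_{\tau_i(s)}^{\tau_i(t)}\sum_{k=1}^{m}(\lambda_k^{*}-\varepsilon)\,p_k(\xi)\,d\xi\Big)ds\bigg)^{1/m}\Bigg)>\frac{1}{m^{m}}.$$ Then all solutions of (E) oscillate.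
   Context: Equation (E) is $x'(t)+\sum_{i=1}^{m}p_i(t)\,x(\tau_i(t))=0$, $t\ge t_0$, where $m\ge1$ is an integer and, for each $i$, $p_i,\tau_i:[t_0,\infty)\to[0,\infty)$ are continuous, $\tau_i(t)\le t$ for $t\ge t_0$, and $\lim_{t\to\infty}\tau_i(t)=\infty$. Let $\tau(t)=\min_i\tau_i(t)$ and $\tau_{(-1)}(t)=\sup\{s:\tau(s)\le t\}$. A solution of (E) is a function $x\in C([T_0,\infty);\mathbb{R})$ for some $T_0\ge t_0$ which is continuously differentiable on $[\tau_{(-1)}(T_0),\infty)$ and satisfies (E) for $t\ge\tau_{(-1)}(T_0)$. A solution is oscillatory if it has arbitrarily large zeros; "all solutions oscillate" means every solution is oscillatory. *)

theory Defs
  imports "HOL-Analysis.Analysis"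
begin

text \<open>Equation (E): x'(t) + sum_{i=1..m} p_i(t) x(tau_i(t)) = 0, indices i in {1..m}.\<close>

definition tau_min :: "nat \<Rightarrow> (nat \<Rightarrow> real \<Rightarrow> real) \<Rightarrow> real \<Rightarrow> real" where
  "tau_min m tau t = Min ((\<lambda>i. tau i t) ` {1..m})"

definition tau_inv :: "nat \<Rightarrow> (nat \<Rightarrow> real \<Rightarrow> real) \<Rightarrow> real \<Rightarrow> real \<Rightarrow> real" where
  "tau_inv m tau t0 T = Sup {s. t0 \<le> s \<and> tau_min m tau s \<le> T}"

definition is_solution ::
  "nat \<Rightarrow> (nat \<Rightarrow> real \<Rightarrow> real) \<Rightarrow> (nat \<Rightarrow> real \<Rightarrow> real) \<Rightarrow> real \<Rightarrow> (real \<Rightarrow> real) \<Rightarrow> bool" where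
  "is_solution m p tau t0 x \<longleftrightarrow>
     (\<exists>T0\<ge>t0. continuous_on {T0..} x \<and>
        (\<exists>x'. continuous_on {tau_inv m tau t0 T0..} x' \<and>
           (\<forall>t\<ge>tau_inv m tau t0 T0.
              (x has_real_derivative x' t) (at t within {tau_inv m tau t0 T0..}) \<and>
              x' t + (\<Sum>i\<in>{1..m}. p i t * x (tau i t)) = 0)))"

definition oscillatory :: "(real \<Rightarrow> real) \<Rightarrow> bool" where
  "oscillatory x \<longleftrightarrow> (\<forall>T. \<exists>t\<ge>T. x t = 0)"

definition A1 :: "nat \<Rightarrow> (nat \<Rightarrow> real \<Rightarrow> real) \<Rightarrow> (nat \<Rightarrow> real \<Rightarrow> real) \<Rightarrow> real \<Rightarrow> real" where
  "A1 m p tau t =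
    (\<Prod>j\<in>{1..m}. (\<Prod>i\<in>{1..m}.
       integral {tau j t..t} (\<lambda>s. p i s *
         exp (integral {tau i s..tau i t} (\<lambda>\<xi>. \<Sum>k\<in>{1..m}. p k \<xi> *
              exp (integral {tau k \<xi>..\<xi>} (\<lambda>u. \<Sum>l\<in>{1..m}. p l u))))))
     powr (1 / real m))"

definition A2 :: "nat \<Rightarrow> (nat \<Rightarrow> real \<Rightarrow> real) \<Rightarrow> (nat \<Rightarrow> real \<Rightarrow> real) \<Rightarrow> (nat \<Rightarrow> real)
                  \<Rightarrow> real \<Rightarrow> real \<Rightarrow> real" where
  "A2 m p tau lam \<epsilon> t =
    (\<Prod>j\<in>{1..m}. (\<Prod>i\<in>{1..m}.
       integral {tau j t..t} (\<lambda>s. p i s *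
         exp (integral {tau i s..tau i t} (\<lambda>\<xi>. \<Sum>k\<in>{1..m}. (lam k - \<epsilon>) * p k \<xi>))))
     powr (1 / real m))"

end

theory Submission imports Defs begin

(* Proof by contradiction: a non-oscillatory solution is eventually of one sign, and since
   the equation is linear we may assume it eventually positive.  For such a solution put
   w_i(t) = x(tau_i t) / x(t) and h(t) = sum_l p_l(t) w_l(t), so that (ln x)' = -h.  Then
     (a) integrating the equation over [tau_j t, t] and bounding x(tau_i s) from below by
         x(tau_i t) exp(G_i(s,t)) for any G_i with exp G_i(s,t) <= x(tau_i s)/x(tau_i t)
         gives sum_i x(tau_i t) A_ij < x(tau_j t); an AM-GM argument turns this family
         of inequalities into prod_j (prod_i A_ij)^(1/m) < 1/m^m  (product_bound);
     (b) any g with 0 <= g <= h yields such a G_i, namely the integral of g over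
         [tau_i s, tau_i t]  (exp_integral_le_ratio);
     (c) for the first condition g = sum_k p_k exp(int sum_l p_l) works because w_i >= 1;
         for the second g = sum_k (lambda_k - eps) p_k works because w_k eventually
         exceeds lambda_k - eps, obtained by iterating c |-> exp(beta_k c) up to the least
         fixed point lambda_k (least_fixpoint_reached).
   Hence both limsups are at most 1/m^m, contradicting the hypothesis. *)

text \<open>Comparison for the Henstock--Kurzweil integral of a possibly non-integrable function:
  a non-integrable function has integral 0, which is also below the nonnegative bound.\<close>
lemma integral_le_has_integral:
  fixes f g :: "real \<Rightarrow> real"
  assumes "(g has_integral I) S" "\<And>x. x \<in> S \<Longrightarrow> 0 \<le> f x" "\<And>x. x \<in> S \<Longrightarrow> f x \<le> g x"
  shows "integral S f \<le> I"
proof (cases "f integrable_on S")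
  case True
  then show ?thesis using assms has_integral_le integrable_integral by blast
next
  case False
  then have "integral S f = 0" by (simp add: not_integrable_integral)
  moreover have "0 \<le> I" using assms by (meson has_integral_nonneg order.trans)
  ultimately show ?thesis by simp
qed

lemma integral_nonneg_any:
  fixes f :: "real \<Rightarrow> real"
  assumes "\<And>x. x \<in> S \<Longrightarrow> 0 \<le> f x"
  shows "0 \<le> integral S f"
  by (metis assms integral_nonneg not_integrable_integral order_refl)

lemma continuous_nonzero_sign:
  fixes f :: "real \<Rightarrow> real"
  assumes cont: "continuous_on {a..} f" and nz: "\<forall>t\<ge>a. f t \<noteq> 0"
  shows "(\<forall>t\<ge>a. f t > 0) \<or> (\<forall>t\<ge>a. f t < 0)"
proof (rule ccontr)
  assume "\<not> ?thesis"
  then obtain s t where s: "s \<ge> a" "f s \<le> 0" and t: "t \<ge> a" "f t \<ge> 0" by force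
  have cont_st: "continuous_on {min s t..max s t} f"
    using continuous_on_subset[OF cont] s t by auto
  have "\<exists>y. min s t \<le> y \<and> y \<le> max s t \<and> f y = 0"
  proof (cases "s \<le> t")
    case True
    then show ?thesis using IVT'[of f s 0 t] cont_st s t by (auto simp: min_def max_def)
  next
    case False
    then show ?thesis using IVT2'[of f s 0 t] cont_st s t by (auto simp: min_def max_def)
  qed
  then show False using nz s t by force
qed

lemma geometric_mean_product_bound:
  fixes y :: "'a \<Rightarrow> real" and A :: "'a \<Rightarrow> 'a \<Rightarrow> real"
  assumes fin: "finite I" and ne: "I \<noteq> {}"
    and y_pos: "\<And>i. i \<in> I \<Longrightarrow> 0 < y i"
    and A_nonneg: "\<And>i j. i \<in> I \<Longrightarrow> j \<in> I \<Longrightarrow> 0 \<le> A i j"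
    and row: "\<And>j. j \<in> I \<Longrightarrow> (\<Sum>i\<in>I. y i * A i j) < y j"
  shows "(\<Prod>j\<in>I. (\<Prod>i\<in>I. A i j) powr (1 / card I)) < 1 / real (card I) ^ card I"
proof -
  define n where "n = card I"
  define r where "r = 1 / real n"
  define P where "P = (\<Prod>i\<in>I. y i)"
  define C where "C j = (\<Prod>i\<in>I. A i j) powr r" for j
  have n_pos: "real n > 0" using fin ne by (simp add: n_def card_gt_0_iff)
  have P_pos: "P > 0" unfolding P_def using y_pos by (auto intro: prod_pos)
  have col: "real n * P powr r * C j < y j" if j: "j \<in> I" for j
  proof -
    have "(\<Prod>i\<in>I. y i * A i j) powr r \<le> (\<Sum>i\<in>I. y i * A i j / n)"
      using arith_geom_mean[OF fin ne, of "\<lambda>i. y i * A i j"] y_pos A_nonneg j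
      by (simp add: less_imp_le n_def r_def)
    moreover have "(\<Prod>i\<in>I. y i * A i j) powr r = P powr r * C j"
      unfolding P_def C_def by (simp add: prod.distrib powr_mult)
    ultimately have "real n * (P powr r * C j) \<le> (\<Sum>i\<in>I. y i * A i j)"
      using n_pos by (simp add: field_simps sum_divide_distrib[symmetric])
    then show ?thesis using row[OF j] by (simp add: mult.assoc)
  qed
  obtain j0 where j0: "j0 \<in> I" using ne by blast
  have "(\<Prod>j\<in>I. real n * P powr r * C j) < (\<Prod>j\<in>I. y j)"
    by (rule prod_mono_strict[where f="\<lambda>j. real n * P powr r * C j" and g=y, OF j0 col[OF j0] fin])
       (use col y_pos A_nonneg in \<open>auto simp: C_def less_imp_le\<close>)
  moreover have "(\<Prod>j\<in>I. real n * P powr r * C j) = real n ^ n * (P powr r) ^ n * (\<Prod>j\<in>I. C j)"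
    by (simp add: prod.distrib n_def power_mult_distrib)
  moreover have "(P powr r) ^ n = P"
    using powr_power[of P r n] P_pos n_pos by (simp add: r_def)
  ultimately have "real n ^ n * P * (\<Prod>j\<in>I. C j) < P" unfolding P_def by simp
  then have "(\<Prod>j\<in>I. C j) < 1 / real n ^ n" using P_pos n_pos by (simp add: field_simps)
  then show ?thesis unfolding C_def r_def n_def .
qed

lemma exp_fixpoint_ge_1:
  fixes \<beta> l :: real
  assumes "0 < \<beta>" "exp (\<beta> * l) = l"
  shows "1 \<le> l"
proof -
  have "0 < l" using assms(2) by (metis exp_gt_zero)
  then show ?thesis using assms by (metis less_eq_real_def one_less_exp_iff zero_less_mult_iff)
qed

text \<open>The supremum of the levels reached is
  itself reached and is mapped into a level not above itself, so it bounds a fixed point.\<close>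
lemma least_fixpoint_reached:
  fixes \<beta> lam :: real and P :: "real \<Rightarrow> bool"
  assumes \<beta>: "0 < \<beta>" and fixp: "exp (\<beta> * lam) = lam"
    and least: "\<forall>l. exp (\<beta> * l) = l \<longrightarrow> lam \<le> l"
    and base: "\<forall>c<1. P c"
    and step: "\<And>c. 1 \<le> c \<Longrightarrow> \<forall>c'<c. P c' \<Longrightarrow> \<forall>c'<exp (\<beta> * c). P c'"
  shows "\<forall>c<lam. P c"
proof -
  define S where "S = {c. 1 \<le> c \<and> c \<le> lam \<and> (\<forall>c'<c. P c')}"
  have S1: "1 \<in> S" using base exp_fixpoint_ge_1[OF \<beta> fixp] by (simp add: S_def)
  have bdd: "bdd_above S" unfolding S_def bdd_above_def by auto
  define cs where "cs = Sup S"
  have cs1: "1 \<le> cs" unfolding cs_def using cSup_upper[OF S1 bdd] .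
  have cs_le: "cs \<le> lam" unfolding cs_def using S1 by (intro cSup_least) (auto simp: S_def)
  have below_cs: "\<forall>c'<cs. P c'"
  proof (intro allI impI)
    fix c' assume "c' < cs"
    then obtain c where "c \<in> S" "c' < c" using less_cSup_iff[of S c'] S1 bdd unfolding cs_def by blast
    then show "P c'" by (auto simp: S_def)
  qed
  have "exp (\<beta> * cs) \<le> exp (\<beta> * lam)" using cs_le \<beta> by simp
  then have "exp (\<beta> * cs) \<in> S"
    using step[OF cs1 below_cs] fixp cs1 \<beta> by (simp add: S_def)
  then have below_self: "exp (\<beta> * cs) \<le> cs" unfolding cs_def using bdd by (rule cSup_upper)
  obtain y where "0 \<le> y" "y \<le> cs" "exp (\<beta> * y) - y = 0"
    using IVT2[of "\<lambda>y. exp (\<beta> * y) - y" cs 0 0] below_self cs1 by (auto intro!: continuous_intros)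
  then have "lam \<le> cs" using least by force
  then show ?thesis using below_cs by simp
qed

section \<open>Eventually positive solutions\<close>

lemma nonoscillatory_positive_solution:
  assumes sol: "is_solution m p tau t0 x" and nonosc: "\<not> oscillatory x"
  obtains a y dy where "t0 \<le> a"
    "\<forall>t\<ge>a. (y has_real_derivative dy t) (at t within {a..})"
    "\<forall>t\<ge>a. dy t + (\<Sum>i\<in>{1..m}. p i t * y (tau i t)) = 0"
    "\<forall>t\<ge>a. y t > 0"
proof -
  obtain T where T: "\<And>t. t \<ge> T \<Longrightarrow> x t \<noteq> 0" using nonosc unfolding oscillatory_def by auto
  obtain a0 dx where
    dx: "\<forall>t\<ge>a0. (x has_real_derivative dx t) (at t within {a0..}) \<and>
              dx t + (\<Sum>i\<in>{1..m}. p i t * x (tau i t)) = 0"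
    using sol unfolding is_solution_def by blast
  define a where "a = max (max T a0) t0"
  have deriv: "\<forall>t\<ge>a. (x has_real_derivative dx t) (at t within {a..})"
    using dx by (auto simp: a_def intro: DERIV_subset)
  have eqn: "\<forall>t\<ge>a. dx t + (\<Sum>i\<in>{1..m}. p i t * x (tau i t)) = 0" using dx by (auto simp: a_def)
  have "continuous_on {a..} x"
    using deriv by (auto simp: continuous_on_eq_continuous_within intro: DERIV_continuous)
  then consider "\<forall>t\<ge>a. x t > 0" | "\<forall>t\<ge>a. x t < 0"
    using continuous_nonzero_sign[of a x] T by (auto simp: a_def)
  then show thesis
  proof cases
    case 1
    then show thesis using that[of a x dx] deriv eqn by (auto simp: a_def)
  next
    case 2
    have "\<forall>t\<ge>a. ((\<lambda>t. - x t) has_real_derivative - dx t) (at t within {a..})"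
      using deriv by (auto intro: DERIV_minus)
    moreover have "\<forall>t\<ge>a. - dx t + (\<Sum>i\<in>{1..m}. p i t * - x (tau i t)) = 0"
      using eqn by (auto simp: sum_negf)
    ultimately show thesis using that[of a "\<lambda>t. - x t" "\<lambda>t. - dx t"] 2 by (auto simp: a_def)
  qed
qed

locale positive_solution =
  fixes m :: nat and t0 a :: real and p tau :: "nat \<Rightarrow> real \<Rightarrow> real" and x dx :: "real \<Rightarrow> real"
  assumes m: "m \<ge> 1"
    and p_cont: "\<forall>i\<in>{1..m}. continuous_on {t0..} (p i)"
    and tau_cont: "\<forall>i\<in>{1..m}. continuous_on {t0..} (tau i)"
    and p_nonneg: "\<forall>i\<in>{1..m}. \<forall>t\<ge>t0. p i t \<ge> 0"
    and tau_le: "\<forall>i\<in>{1..m}. \<forall>t\<ge>t0. tau i t \<le> t"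
    and tau_lim: "\<forall>i\<in>{1..m}. filterlim (tau i) at_top at_top"
    and tau_mono: "\<forall>i\<in>{1..m}. mono_on {t0..} (tau i)"
    and a_ge: "t0 \<le> a"
    and deriv: "\<forall>t\<ge>a. (x has_real_derivative dx t) (at t within {a..})"
    and eqn: "\<forall>t\<ge>a. dx t + (\<Sum>i\<in>{1..m}. p i t * x (tau i t)) = 0"
    and pos: "\<forall>t\<ge>a. x t > 0"
begin

definition beyond :: "real \<Rightarrow> real" where
  "beyond c = (SOME T. T \<ge> c \<and> (\<forall>t\<ge>T. \<forall>i\<in>{1..m}. c \<le> tau i t))"

lemma beyond: "beyond c \<ge> c" "t \<ge> beyond c \<Longrightarrow> i \<in> {1..m} \<Longrightarrow> c \<le> tau i t"
proof -
  have "eventually (\<lambda>t. \<forall>i\<in>{1..m}. c \<le> tau i t) at_top"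
    using tau_lim by (auto intro!: eventually_ball_finite simp: filterlim_at_top)
  then obtain T where "\<forall>t\<ge>T. \<forall>i\<in>{1..m}. c \<le> tau i t" by (auto simp: eventually_at_top_linorder)
  then have "\<exists>T. T \<ge> c \<and> (\<forall>t\<ge>T. \<forall>i\<in>{1..m}. c \<le> tau i t)" by (intro exI[of _ "max T c"]) auto
  from someI_ex[OF this] show "beyond c \<ge> c" "t \<ge> beyond c \<Longrightarrow> i \<in> {1..m} \<Longrightarrow> c \<le> tau i t"
    unfolding beyond_def by auto
qed

text \<open>From \<open>T1\<close> on, all delayed values of \<open>x\<close> are positive; from \<open>T2\<close> on, the delayed
  arguments lie in the region where \<open>x\<close> is non-increasing.\<close>
definition "T1 = beyond a"
definition "T2 = beyond T1"

lemma T_order: "a \<le> T1" "T1 \<le> T2" "t0 \<le> T1"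
  using beyond(1)[of a] beyond(1)[of T1] a_ge unfolding T1_def T2_def by linarith+

lemma after_T1:
  assumes "t \<ge> T1"
  shows "t \<ge> a" "t \<ge> t0" "x t > 0" "\<And>i. i\<in>{1..m} \<Longrightarrow> a \<le> tau i t"
    "\<And>i. i\<in>{1..m} \<Longrightarrow> tau i t \<le> t" "\<And>i. i\<in>{1..m} \<Longrightarrow> x (tau i t) > 0"
    "\<And>i. i\<in>{1..m} \<Longrightarrow> p i t \<ge> 0"
proof -
  show "t \<ge> a" and "t \<ge> t0" using assms T_order by linarith+
  then show "x t > 0" using pos by simp
  fix i assume i: "i \<in> {1..m}"
  show tau_a: "a \<le> tau i t" using beyond(2)[of a t i] assms i unfolding T1_def by simp
  show "tau i t \<le> t" using tau_le i \<open>t \<ge> t0\<close> by simp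
  show "x (tau i t) > 0" using pos tau_a by simp
  show "p i t \<ge> 0" using p_nonneg i \<open>t \<ge> t0\<close> by simp
qed

lemma tau_mono_le: "i \<in> {1..m} \<Longrightarrow> t0 \<le> s \<Longrightarrow> s \<le> t \<Longrightarrow> tau i s \<le> tau i t"
  using tau_mono by (auto simp: mono_on_def)

text \<open>The ratios \<open>w_i(t) = x(tau_i t) / x(t)\<close> and the logarithmic decay rate
  \<open>h = -x'/x = \<Sum>l. p_l w_l\<close>.\<close>
definition ratio :: "nat \<Rightarrow> real \<Rightarrow> real" where "ratio i t = x (tau i t) / x t"
definition rate :: "real \<Rightarrow> real" where "rate t = (\<Sum>l\<in>{1..m}. p l t * ratio l t)"

lemma ratio_pos: "t \<ge> T1 \<Longrightarrow> i \<in> {1..m} \<Longrightarrow> ratio i t > 0"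
  unfolding ratio_def using after_T1 by auto

lemma rate_ge_term: "t \<ge> T1 \<Longrightarrow> i \<in> {1..m} \<Longrightarrow> p i t * ratio i t \<le> rate t"
  unfolding rate_def
  by (rule member_le_sum) (auto intro!: mult_nonneg_nonneg less_imp_le[OF ratio_pos] after_T1)

lemma rate_nonneg: "t \<ge> T1 \<Longrightarrow> 0 \<le> rate t"
  unfolding rate_def by (auto intro!: sum_nonneg mult_nonneg_nonneg less_imp_le[OF ratio_pos] after_T1)

lemma rate_has_integral:
  assumes "a \<le> c" "c \<le> d"
  shows "(rate has_integral (ln (x c) - ln (x d))) {c..d}"
proof -
  have "((\<lambda>t. ln (x t)) has_vector_derivative (dx s / x s)) (at s within {c..d})"
    if s: "s \<in> {c..d}" for s
  proof -
    have "(x has_real_derivative dx s) (at s within {c..d})"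
      using deriv DERIV_subset[of x "dx s" s "{a..}" "{c..d}"] assms s by auto
    from DERIV_chain2[OF DERIV_ln_divide[of "x s"] this] show ?thesis
      using pos assms s by (simp add: has_real_derivative_iff_has_vector_derivative[symmetric])
  qed
  from has_integral_neg[OF fundamental_theorem_of_calculus[OF assms(2) this]]
  have "((\<lambda>s. - (dx s / x s)) has_integral ln (x c) - ln (x d)) {c..d}" by simp
  moreover have "- (dx s / x s) = rate s" if "s \<in> {c..d}" for s
  proof -
    have "dx s + (\<Sum>i\<in>{1..m}. p i s * x (tau i s)) = 0" using eqn that assms by auto
    then have "dx s = - (\<Sum>i\<in>{1..m}. p i s * x (tau i s))" by linarith
    then show ?thesis using pos that assms by (simp add: rate_def ratio_def sum_divide_distrib[symmetric])
  qed
  ultimately show ?thesis by (rule has_integral_cong[THEN iffD1, rotated]) auto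
qed

text \<open>Since \<open>h \<ge> 0\<close> beyond \<open>T1\<close>, the solution is non-increasing there.\<close>
lemma x_antimono:
  assumes "T1 \<le> c" "c \<le> d"
  shows "x d \<le> x c"
proof -
  have "0 \<le> ln (x c) - ln (x d)"
    using has_integral_nonneg[OF rate_has_integral] rate_nonneg assms T_order by auto
  then show ?thesis using after_T1(3)[of c] after_T1(3)[of d] assms by auto
qed

lemma rate_has_integral_ln_ratio:
  assumes "t \<ge> T1" "i \<in> {1..m}"
  shows "(rate has_integral ln (ratio i t)) {tau i t..t}"
  using rate_has_integral[OF after_T1(4,5)[OF assms]] after_T1(3)[OF assms(1)] after_T1(6)[OF assms]
  by (simp add: ratio_def ln_div)

lemma ratio_ge_1: "t \<ge> T2 \<Longrightarrow> i \<in> {1..m} \<Longrightarrow> ratio i t \<ge> 1"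
  using x_antimono[of "tau i t" t] beyond(2)[of T1 t i] after_T1[of t] T_order
  unfolding ratio_def T2_def by (auto simp: field_simps)

text \<open>Since every \<open>w_l \<ge> 1\<close>, the rate dominates \<open>\<Sum>l. p_l\<close>.\<close>
lemma sum_p_le_rate: "t \<ge> T2 \<Longrightarrow> (\<Sum>l\<in>{1..m}. p l t) \<le> rate t"
  unfolding rate_def
proof (rule sum_mono)
  fix l assume "t \<ge> T2" "l \<in> {1..m}"
  then show "p l t \<le> p l t * ratio l t"
    using mult_left_mono[OF ratio_ge_1 after_T1(7)] T_order by fastforce
qed

lemma exp_integral_le_ratio:
  assumes T: "T \<ge> T1" and i: "i \<in> {1..m}" and s: "beyond T \<le> s" "s \<le> t"
    and g: "\<And>\<xi>. \<xi> \<ge> T \<Longrightarrow> 0 \<le> g \<xi> \<and> g \<xi> \<le> rate \<xi>"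
  shows "exp (integral {tau i s..tau i t} g) \<le> x (tau i s) / x (tau i t)"
proof -
  have s1: "tau i s \<ge> T" using beyond(2)[OF s(1) i] .
  have st: "tau i s \<le> tau i t" using tau_mono_le[OF i _ s(2)] s beyond(1)[of T] T T_order by auto
  have "integral {tau i s..tau i t} g \<le> ln (x (tau i s)) - ln (x (tau i t))"
    by (rule integral_le_has_integral[OF rate_has_integral]) (use s1 st T T_order g in auto)
  then have "exp (integral {tau i s..tau i t} g) \<le> exp (ln (x (tau i s)) - ln (x (tau i t)))" by simp
  also have "\<dots> = x (tau i s) / x (tau i t)" using pos s1 st T T_order by (simp add: exp_diff)
  finally show ?thesis .
qed

section \<open>The product estimate\<close>

lemma delayed_terms_integrable:
  assumes c: "T1 \<le> c" and i: "i \<in> {1..m}"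
  shows "(\<lambda>s. p i s * x (tau i s)) integrable_on {c..d}"
proof (rule integrable_continuous_interval)
  have sub: "{c..d} \<subseteq> {t0..}" using c T_order by auto
  have "continuous_on {a..} x"
    using deriv by (auto simp: continuous_on_eq_continuous_within intro: DERIV_continuous)
  moreover have "continuous_on {c..d} (tau i)" using tau_cont i continuous_on_subset[OF _ sub] by blast
  moreover have "tau i ` {c..d} \<subseteq> {a..}" using after_T1(4)[OF _ i] c by auto
  ultimately have "continuous_on {c..d} (\<lambda>s. x (tau i s))" using continuous_on_compose2 by blast
  moreover have "continuous_on {c..d} (p i)" using p_cont i continuous_on_subset[OF _ sub] by blast
  ultimately show "continuous_on {c..d} (\<lambda>s. p i s * x (tau i s))" by (intro continuous_intros)
qed

lemma delayed_terms_integral: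
  assumes cd: "T1 \<le> c" "c \<le> d"
  shows "(\<Sum>i\<in>{1..m}. integral {c..d} (\<lambda>s. p i s * x (tau i s))) = x c - x d"
proof -
  have "(dx has_integral x d - x c) {c..d}"
  proof (rule fundamental_theorem_of_calculus[OF cd(2)])
    fix s assume "s \<in> {c..d}"
    then show "(x has_vector_derivative dx s) (at s within {c..d})"
      using deriv cd T_order DERIV_subset[of x "dx s" s "{a..}" "{c..d}"]
      by (auto simp: has_real_derivative_iff_has_vector_derivative[symmetric])
  qed
  from has_integral_neg[OF this]
  have "((\<lambda>s. - dx s) has_integral x c - x d) {c..d}" by simp
  then have "((\<lambda>s. \<Sum>i\<in>{1..m}. p i s * x (tau i s)) has_integral x c - x d) {c..d}"
  proof (rule has_integral_cong[THEN iffD1, rotated])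
    fix s assume "s \<in> {c..d}"
    then have "dx s + (\<Sum>i\<in>{1..m}. p i s * x (tau i s)) = 0" using eqn cd T_order by auto
    then show "- dx s = (\<Sum>i\<in>{1..m}. p i s * x (tau i s))" by linarith
  qed
  then have "integral {c..d} (\<lambda>s. \<Sum>i\<in>{1..m}. p i s * x (tau i s)) = x c - x d"
    by (rule integral_unique)
  moreover have "integral {c..d} (\<lambda>s. \<Sum>i\<in>{1..m}. p i s * x (tau i s))
      = (\<Sum>i\<in>{1..m}. integral {c..d} (\<lambda>s. p i s * x (tau i s)))"
    by (rule integral_sum) (use delayed_terms_integrable[OF cd(1)] in auto)
  ultimately show ?thesis by simp
qed

lemma product_bound:
  assumes T: "T \<ge> T1"
    and G: "\<And>i s t. i\<in>{1..m} \<Longrightarrow> T \<le> s \<Longrightarrow> s \<le> t \<Longrightarrow> exp (G i s t) \<le> x (tau i s) / x (tau i t)"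
    and t: "t \<ge> beyond T"
  shows "(\<Prod>j\<in>{1..m}. (\<Prod>i\<in>{1..m}. integral {tau j t..t} (\<lambda>s. p i s * exp (G i s t))) powr (1 / real m))
         < 1 / real m ^ m"
proof -
  have tT1: "t \<ge> T1" using t T beyond(1)[of T] by linarith
  have window: "T \<le> s" "s \<le> t" "s \<ge> T1" if "j \<in> {1..m}" "s \<in> {tau j t..t}" for j s
    using beyond(2)[OF t that(1)] that(2) T by auto
  define A where "A i j = integral {tau j t..t} (\<lambda>s. p i s * exp (G i s t))" for i j
  have A_nonneg: "0 \<le> A i j" if "i \<in> {1..m}" "j \<in> {1..m}" for i j
    unfolding A_def
  proof (rule integral_nonneg_any)
    fix s assume "s \<in> {tau j t..t}"
    then have "T1 \<le> s" using window(3)[OF that(2)] by blast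
    then show "0 \<le> p i s * exp (G i s t)" using after_T1(7)[OF _ that(1)] by simp
  qed
  have row: "(\<Sum>i\<in>{1..m}. x (tau i t) * A i j) < x (tau j t)" if j: "j \<in> {1..m}" for j
  proof -
    have tj: "T1 \<le> tau j t" and tj_le: "tau j t \<le> t"
      using beyond(2)[OF t j] T after_T1(5)[OF tT1 j] by auto
    have each: "x (tau i t) * A i j \<le> integral {tau j t..t} (\<lambda>s. p i s * x (tau i s))"
      if i: "i \<in> {1..m}" for i
    proof -
      have "x (tau i t) * A i j = integral {tau j t..t} (\<lambda>s. x (tau i t) * (p i s * exp (G i s t)))"
        unfolding A_def by simp
      also have "\<dots> \<le> integral {tau j t..t} (\<lambda>s. p i s * x (tau i s))"
      proof (rule integral_le_has_integral[OF integrable_integral[OF delayed_terms_integrable[OF tj i]]])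
        fix s assume s: "s \<in> {tau j t..t}"
        have pp: "p i s \<ge> 0" and xp: "x (tau i t) > 0"
          using after_T1(6,7)[OF _ i] window[OF j s] tT1 by auto
        then show "0 \<le> x (tau i t) * (p i s * exp (G i s t))" by simp
        have "x (tau i t) * exp (G i s t) \<le> x (tau i s)"
          using G[OF i window(1,2)[OF j s]] xp by (simp add: field_simps)
        from mult_left_mono[OF this pp]
        show "x (tau i t) * (p i s * exp (G i s t)) \<le> p i s * x (tau i s)" by (simp add: algebra_simps)
      qed
      finally show ?thesis .
    qed
    have "(\<Sum>i\<in>{1..m}. x (tau i t) * A i j) \<le> (\<Sum>i\<in>{1..m}. integral {tau j t..t} (\<lambda>s. p i s * x (tau i s)))"
      by (rule sum_mono) (rule each)
    then have "(\<Sum>i\<in>{1..m}. x (tau i t) * A i j) \<le> x (tau j t) - x t"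
      using delayed_terms_integral[OF tj tj_le] by linarith
    then show ?thesis using after_T1(3)[OF tT1] by simp
  qed
  have "(\<Prod>j\<in>{1..m}. (\<Prod>i\<in>{1..m}. A i j) powr (1 / card {1..m})) < 1 / real (card {1..m}) ^ card {1..m}"
    by (rule geometric_mean_product_bound[OF _ _ _ A_nonneg row]) (use m after_T1(6)[OF tT1] in auto)
  then show ?thesis unfolding A_def by simp
qed

section \<open>The first condition fails\<close>

text \<open>\<open>exp (\<integral>\<^bsub>[tau_k \<xi>, \<xi>]\<^esub> \<Sum>l. p_l) \<le> w_k(\<xi>)\<close>, so the integrand of \<open>A1\<close> is dominated by \<open>h\<close>.\<close>
lemma exp_integral_sum_p_le_ratio:
  assumes \<xi>: "\<xi> \<ge> beyond T2" and k: "k \<in> {1..m}"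
  shows "exp (integral {tau k \<xi>..\<xi>} (\<lambda>u. \<Sum>l\<in>{1..m}. p l u)) \<le> ratio k \<xi>"
proof -
  have \<xi>2: "\<xi> \<ge> T2" using \<xi> beyond(1)[of T2] by linarith
  have "integral {tau k \<xi>..\<xi>} (\<lambda>u. \<Sum>l\<in>{1..m}. p l u) \<le> ln (ratio k \<xi>)"
  proof (rule integral_le_has_integral[OF rate_has_integral_ln_ratio])
    fix u assume "u \<in> {tau k \<xi>..\<xi>}"
    then have u2: "u \<ge> T2" using beyond(2)[OF \<xi> k] by auto
    then show "0 \<le> (\<Sum>l\<in>{1..m}. p l u)" using after_T1(7) T_order by (auto intro: sum_nonneg)
    show "(\<Sum>l\<in>{1..m}. p l u) \<le> rate u" using sum_p_le_rate[OF u2] .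
  qed (use \<xi>2 T_order k in auto)
  then show ?thesis using ratio_pos[of \<xi> k] \<xi>2 T_order k
    by (metis exp_le_cancel_iff exp_ln order.trans)
qed

lemma limsup_A1_le: "Limsup at_top (\<lambda>t. ereal (A1 m p tau t)) \<le> ereal (1 / real m ^ m)"
proof (rule Limsup_bounded)
  define T where "T = beyond T2"
  have T: "T \<ge> T1" using beyond(1)[of T2] T_order unfolding T_def by linarith
  define g where "g \<xi> = (\<Sum>k\<in>{1..m}. p k \<xi> * exp (integral {tau k \<xi>..\<xi>} (\<lambda>u. \<Sum>l\<in>{1..m}. p l u)))" for \<xi>
  have g: "0 \<le> g \<xi> \<and> g \<xi> \<le> rate \<xi>" if "\<xi> \<ge> T" for \<xi>
    unfolding g_def rate_def using that T after_T1(7)[of \<xi>] exp_integral_sum_p_le_ratio[of \<xi>]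
    by (auto simp: T_def intro!: sum_nonneg sum_mono mult_left_mono)
  have "A1 m p tau t < 1 / real m ^ m" if "t \<ge> beyond (beyond T)" for t
    using product_bound[OF order.trans[OF T beyond(1)] exp_integral_le_ratio[OF T _ _ _ g] that]
    unfolding A1_def g_def by simp
  then show "eventually (\<lambda>t. ereal (A1 m p tau t) \<le> ereal (1 / real m ^ m)) at_top"
    unfolding eventually_at_top_linorder by (meson less_imp_le ereal_less_eq(3))
qed

section \<open>The second condition fails\<close>

text \<open>One step of the iteration: if \<open>w_i\<close> eventually exceeds every level below \<open>c \<ge> 1\<close>, then
  it eventually exceeds every level below \<open>exp (\<beta> * c)\<close>, where \<open>\<beta>\<close> bounds the
  lower limit of \<open>\<integral>\<^bsub>[tau_i t, t]\<^esub> p_i\<close>; indeed \<open>ln w_i(t) \<ge> \<integral> w_i p_i\<close>.\<close>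
lemma ratio_lower_bound_step:
  assumes i: "i \<in> {1..m}"
    and \<beta>: "ereal \<beta> \<le> Liminf at_top (\<lambda>t. ereal (integral {tau i t..t} (p i)))" "0 < \<beta>"
    and below: "\<forall>c'<c. eventually (\<lambda>t. c' \<le> ratio i t) at_top" and c1: "c \<ge> 1"
  shows "\<forall>c'<exp (\<beta> * c). eventually (\<lambda>t. c' \<le> ratio i t) at_top"
proof (intro allI impI)
  fix c' assume c': "c' < exp (\<beta> * c)"
  have "((\<lambda>d. exp ((c - d) * (\<beta> - d))) \<longlongrightarrow> exp ((c - 0) * (\<beta> - 0))) (at_right 0)"
    by (intro tendsto_intros)
  then have "eventually (\<lambda>d. c' < exp ((c - d) * (\<beta> - d))) (at_right 0)"
    using c' by (intro order_tendstoD(1)) (simp_all add: mult.commute)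
  then obtain b0 where b0: "b0 > 0" "\<And>d. d > 0 \<Longrightarrow> d < b0 \<Longrightarrow> c' < exp ((c - d) * (\<beta> - d))"
    unfolding eventually_at_right_field by blast
  define d where "d = min (b0 / 2) (min (c / 2) (\<beta> / 2))"
  have d: "0 < d" "d < c" "d < \<beta>" "c' < exp ((c - d) * (\<beta> - d))"
    using b0 c1 \<beta>(2) unfolding d_def by auto
  have "eventually (\<lambda>t. c - d \<le> ratio i t) at_top" using below d by simp
  then obtain Ta where Ta: "\<And>t. t \<ge> Ta \<Longrightarrow> c - d \<le> ratio i t"
    by (auto simp: eventually_at_top_linorder)
  have "ereal (\<beta> - d) < ereal \<beta>" using d by simp
  then have "eventually (\<lambda>t. ereal (\<beta> - d) < ereal (integral {tau i t..t} (p i))) at_top"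
    by (rule le_Liminf_iff[THEN iffD1, OF \<beta>(1), rule_format])
  moreover have "eventually (\<lambda>t. t \<ge> beyond (max Ta T1)) at_top" by simp
  ultimately show "eventually (\<lambda>t. c' \<le> ratio i t) at_top"
  proof eventually_elim
    case (elim t)
    have t1: "t \<ge> T1" using elim(2) beyond(1)[of "max Ta T1"] by auto
    have window: "s \<ge> Ta" "s \<ge> T1" if "s \<in> {tau i t..t}" for s
      using that beyond(2)[OF elim(2) i] by auto
    have "integral {tau i t..t} (\<lambda>s. (c - d) * p i s) \<le> ln (ratio i t)"
    proof (rule integral_le_has_integral[OF rate_has_integral_ln_ratio[OF t1 i]])
      fix s assume s: "s \<in> {tau i t..t}"
      have pp: "p i s \<ge> 0" using after_T1(7)[OF window(2)[OF s] i] .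
      then show "0 \<le> (c - d) * p i s" using d by simp
      have "(c - d) * p i s \<le> ratio i s * p i s" using Ta[OF window(1)[OF s]] pp by (rule mult_right_mono)
      also have "\<dots> \<le> rate s" using rate_ge_term[OF window(2)[OF s] i] by (simp add: mult.commute)
      finally show "(c - d) * p i s \<le> rate s" .
    qed
    moreover have "(c - d) * (\<beta> - d) \<le> (c - d) * integral {tau i t..t} (p i)"
      using elim(1) d by (intro mult_left_mono) auto
    ultimately have "(c - d) * (\<beta> - d) \<le> ln (ratio i t)" by simp
    then have "exp ((c - d) * (\<beta> - d)) \<le> ratio i t"
      using ratio_pos[OF t1 i] by (metis exp_le_cancel_iff exp_ln)
    then show ?case using d by simp
  qed
qed

lemma ratio_eventually_above_fixpoint:
  assumes i: "i \<in> {1..m}"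
    and \<beta>: "ereal \<beta> \<le> Liminf at_top (\<lambda>t. ereal (integral {tau i t..t} (p i)))" "0 < \<beta>"
    and fixp: "exp (\<beta> * lam) = lam" and least: "\<forall>l. exp (\<beta> * l) = l \<longrightarrow> lam \<le> l"
    and \<epsilon>: "\<epsilon> > 0"
  shows "eventually (\<lambda>t. lam - \<epsilon> \<le> ratio i t) at_top"
proof -
  have "\<forall>c<lam. eventually (\<lambda>t. c \<le> ratio i t) at_top"
  proof (rule least_fixpoint_reached[OF \<beta>(2) fixp least])
    show "\<forall>c<1. eventually (\<lambda>t. c \<le> ratio i t) at_top"
      using ratio_ge_1[OF _ i] by (auto simp: eventually_at_top_linorder intro!: exI[of _ T2]
        intro: order.trans[OF less_imp_le])
  qed (rule ratio_lower_bound_step[OF i \<beta>])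
  then show ?thesis using \<epsilon> by simp
qed

text \<open>Likewise the second condition fails: for \<open>0 < \<epsilon> < 1\<close> the weights \<open>lam k - \<epsilon>\<close> are
  nonnegative and eventually below \<open>w_k\<close>, so \<open>A2\<close> is eventually below \<open>1/m^m\<close>.\<close>
lemma limsup_A2_le:
  assumes hyp: "\<forall>i\<in>{1..m}.
               Liminf at_top (\<lambda>t. ereal (integral {tau i t..t} (p i))) = ereal (\<beta> i)
               \<and> 0 < \<beta> i \<and> \<beta> i \<le> exp (-1)
               \<and> exp (\<beta> i * lam i) = lam i
               \<and> (\<forall>l. exp (\<beta> i * l) = l \<longrightarrow> lam i \<le> l)"
  shows "Limsup (at_right 0) (\<lambda>\<epsilon>. Limsup at_top (\<lambda>t. ereal (A2 m p tau lam \<epsilon> t)))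
              \<le> ereal (1 / real m ^ m)"
proof (rule Limsup_bounded)
  have "Limsup at_top (\<lambda>t. ereal (A2 m p tau lam \<epsilon> t)) \<le> ereal (1 / real m ^ m)"
    if \<epsilon>: "0 < \<epsilon>" "\<epsilon> < 1" for \<epsilon> :: real
  proof (rule Limsup_bounded)
    have "eventually (\<lambda>t. \<forall>k\<in>{1..m}. lam k - \<epsilon> \<le> ratio k t) at_top"
    proof (rule eventually_ball_finite[OF finite_atLeastAtMost], rule ballI)
      fix k assume "k \<in> {1..m}"
      then show "eventually (\<lambda>t. lam k - \<epsilon> \<le> ratio k t) at_top"
        using hyp \<epsilon> by (intro ratio_eventually_above_fixpoint[of k "\<beta> k"]) auto
    qed
    then obtain Te where Te: "\<And>t k. t \<ge> Te \<Longrightarrow> k \<in> {1..m} \<Longrightarrow> lam k - \<epsilon> \<le> ratio k t"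
      unfolding eventually_at_top_linorder by blast
    define T where "T = max Te T1"
    have T: "T \<ge> T1" by (simp add: T_def)
    have lam_ge: "lam k - \<epsilon> \<ge> 0" if "k \<in> {1..m}" for k
      using exp_fixpoint_ge_1[of "\<beta> k" "lam k"] hyp that \<epsilon> by auto
    define g where "g \<xi> = (\<Sum>k\<in>{1..m}. (lam k - \<epsilon>) * p k \<xi>)" for \<xi>
    have g: "0 \<le> g \<xi> \<and> g \<xi> \<le> rate \<xi>" if "\<xi> \<ge> T" for \<xi>
      unfolding g_def rate_def using that Te[of \<xi>] lam_ge after_T1(7)[of \<xi>]
      by (auto simp: T_def mult.commute intro!: sum_nonneg sum_mono mult_left_mono)
    have "A2 m p tau lam \<epsilon> t < 1 / real m ^ m" if "t \<ge> beyond (beyond T)" for t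
      using product_bound[OF order.trans[OF T beyond(1)] exp_integral_le_ratio[OF T _ _ _ g] that]
      unfolding A2_def g_def by simp
    then show "eventually (\<lambda>t. ereal (A2 m p tau lam \<epsilon> t) \<le> ereal (1 / real m ^ m)) at_top"
      unfolding eventually_at_top_linorder by (meson less_imp_le ereal_less_eq(3))
  qed
  moreover have "eventually (\<lambda>\<epsilon>::real. 0 < \<epsilon> \<and> \<epsilon> < 1) (at_right 0)"
    unfolding eventually_at_right_field by (intro exI[of _ 1]) auto
  ultimately show "eventually (\<lambda>\<epsilon>. Limsup at_top (\<lambda>t. ereal (A2 m p tau lam \<epsilon> t))
                                     \<le> ereal (1 / real m ^ m)) (at_right 0)"
    by (auto elim: eventually_mono)
qed

end

theorem theorem3p3:
  fixes m :: nat and t0 :: real and p tau :: "nat \<Rightarrow> real \<Rightarrow> real"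
  assumes m: "m \<ge> 1"
    and p_cont: "\<forall>i\<in>{1..m}. continuous_on {t0..} (p i)"
    and tau_cont: "\<forall>i\<in>{1..m}. continuous_on {t0..} (tau i)"
    and p_nonneg: "\<forall>i\<in>{1..m}. \<forall>t\<ge>t0. p i t \<ge> 0"
    and tau_nonneg: "\<forall>i\<in>{1..m}. \<forall>t\<ge>t0. tau i t \<ge> 0"
    and tau_le: "\<forall>i\<in>{1..m}. \<forall>t\<ge>t0. tau i t \<le> t"
    and tau_lim: "\<forall>i\<in>{1..m}. filterlim (tau i) at_top at_top"
    and tau_mono: "\<forall>i\<in>{1..m}. mono_on {t0..} (tau i)"
    and cond:
      "Limsup at_top (\<lambda>t. ereal (A1 m p tau t)) > ereal (1 / real m ^ m)
       \<or> (\<exists>\<beta> lam :: nat \<Rightarrow> real.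
            (\<forall>i\<in>{1..m}.
               Liminf at_top (\<lambda>t. ereal (integral {tau i t..t} (p i))) = ereal (\<beta> i)
               \<and> 0 < \<beta> i \<and> \<beta> i \<le> exp (-1)
               \<and> exp (\<beta> i * lam i) = lam i
               \<and> (\<forall>l. exp (\<beta> i * l) = l \<longrightarrow> lam i \<le> l))
            \<and> Limsup (at_right 0)
                (\<lambda>\<epsilon>. Limsup at_top (\<lambda>t. ereal (A2 m p tau lam \<epsilon> t)))
              > ereal (1 / real m ^ m))"
  shows "\<forall>x. is_solution m p tau t0 x \<longrightarrow> oscillatory x"
proof (intro allI impI)
  fix x assume sol: "is_solution m p tau t0 x"
  show "oscillatory x"
  proof (rule ccontr)
    assume "\<not> oscillatory x"
    then obtain a y dy where "t0 \<le> a"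
      "\<forall>t\<ge>a. (y has_real_derivative dy t) (at t within {a..})"
      "\<forall>t\<ge>a. dy t + (\<Sum>i\<in>{1..m}. p i t * y (tau i t)) = 0" "\<forall>t\<ge>a. y t > 0"
      by (rule nonoscillatory_positive_solution[OF sol])
    then interpret positive_solution m t0 a p tau y dy
      by (intro positive_solution.intro m p_cont tau_cont p_nonneg tau_le tau_lim tau_mono)
    show False
      using cond limsup_A1_le limsup_A2_le by (blast dest: leD)
  qed
qed

end
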